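(* Let $N\geq 3$ be prime, $q\in\mathbb{C}$ with $q^N=1$, $q\neq 1$, and let $X\subset\mathbb{R}^d$ be a convex subspace. Let $\tau:\Delta^m\to X$ and $\sigma:\Delta^n\to X$ be singular simplices ($m,n\geq 0$). Then for every integer $k\geq 0$, $$\partial^k(\tau*\sigma)=\sum_{i=0}^k q^{\,i(m+1-k+i)}\binom{k}{i}_q\,\mathcal{N}^{k-i}(\tau)*\mathcal{N}^{i}(\sigma).$$
   Context: $q$-numbers: $[k]_q=1+q+\cdots+q^{k-1}$, $[k]_q!=[1]_q\cdots[k]_q$ (with $[0]_q!=1$); $\binom{k}{i}_q$ denotes the Gaussian $q$-binomial coefficient evaluated at $q$, which equals $[k]_q!/([i]_q![k-i]_q!)$ for $0\le i\le k\le N-1$ and satisfies $\binom{n}{k}_q+q^{k+1}\binom{n}{k+1}_q=\binom{n+1}{k+1}_q$. Singular $q$-chains: $C^q_n(X)$ is the free $\mathbb{Z}[q]$-module on continuous maps $\Delta^n\to X$, $\Delta^n$ the convex hull of the standard basis $e_0,\dots,e_n$ of $\mathbb{R}^{n+1}$; $\partial_j\sigma=\sigma\circ\lambda_j$ with $\lambda_j:\Delta^{n-1}\to\Delta^n$ the affine map sending $e_0,\dots,e_{n-1}$ in order to $e_0,\dots,\widehat{e_j},\dots,e_n$; border map $\partial=\sum_{j=0}^n q^j\partial_j$ on $C^q_n(X)$ ($n\ge1$), $\partial=0$ on $C^q_0(X)$. Convex product: for $\tau:\Delta^m\to X$, $\sigma:\Delta^n\to X$ and $(\alpha;\beta)=(\alpha_0,\dots,\alpha_m;\beta_0,\dots,\beta_n)\in\Delta^{m+n+1}$,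 $\tau*\sigma(\alpha;\beta)$ is $\tau(\alpha)$ if $|\beta|=0$, $\sigma(\beta)$ if $|\alpha|=0$, and $|\alpha|\tau(\alpha/|\alpha|)+|\beta|\sigma(\beta/|\beta|)$ otherwise ($|\alpha|=\sum\alpha_i$, $|\beta|=\sum\beta_j$), extended bilinearly to chains. Newton's terms of a singular $m$-simplex $\tau$: $\mathcal{N}^i(\tau)=\partial^i(\tau)$ for $i\le m$, $\mathcal{N}^{m+1}(\tau)=[m+1]_q!\in\mathbb{Z}[q]$, and $\mathcal{N}^i(\tau)=0$ for $i\geq m+2$. Convention for convex products involving scalars: for $c\in\mathbb{Z}[q]$ and a chain $\xi$ of dimension $\ge0$, $c*\xi=\xi*c=c\,\xi$; for $c,c'\in\mathbb{Z}[q]$, $c*c'=0$. *)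

theory Defs
  imports "HOL-Analysis.Analysis" "HOL-Homology.Homology"
begin

text \<open>Singular q-chains with coefficients in the complex numbers (Z[q] is a subring of C).
  A singular n-simplex is a map on standard_simplex n (HOL-Homology's model of Delta^n,
  extensional outside it). The dimension of a chain is carried explicitly.\<close>

type_synonym 'a qchain = "((nat \<Rightarrow> real) \<Rightarrow> 'a) \<Rightarrow>\<^sub>0 complex"

definition qint :: "complex \<Rightarrow> nat \<Rightarrow> complex" where
  "qint q k = (\<Sum>i<k. q ^ i)"

definition qfact :: "complex \<Rightarrow> nat \<Rightarrow> complex" where
  "qfact q k = (\<Prod>i\<in>{1..k}. qint q i)"

fun qbinom :: "complex \<Rightarrow> nat \<Rightarrow> nat \<Rightarrow> complex" where
  "qbinom q n 0 = 1"
| "qbinom q 0 (Suc k) = 0"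
| "qbinom q (Suc n) (Suc k) = qbinom q n k + q ^ (Suc k) * qbinom q n (Suc k)"

definition qsmult :: "complex \<Rightarrow> 'a qchain \<Rightarrow> 'a qchain" where
  "qsmult a c = Poly_Mapping.map (\<lambda>x. a * x) c"

definition qbd :: "complex \<Rightarrow> nat \<Rightarrow> 'a qchain \<Rightarrow> 'a qchain" where
  "qbd q p c = (if p = 0 then 0 else
     (\<Sum>s\<in>Poly_Mapping.keys c. \<Sum>j\<le>p. Poly_Mapping.single (singular_face p j s) (q ^ j * Poly_Mapping.lookup c s)))"

fun qbdpow :: "complex \<Rightarrow> nat \<Rightarrow> nat \<Rightarrow> 'a qchain \<Rightarrow> 'a qchain" where
  "qbdpow q 0 p c = c"
| "qbdpow q (Suc k) p c = qbd q (p - k) (qbdpow q k p c)"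

definition conv_simplex :: "nat \<Rightarrow> nat \<Rightarrow> ((nat \<Rightarrow> real) \<Rightarrow> 'a::real_vector)
    \<Rightarrow> ((nat \<Rightarrow> real) \<Rightarrow> 'a) \<Rightarrow> (nat \<Rightarrow> real) \<Rightarrow> 'a" where
  "conv_simplex m n tu sg = restrict (\<lambda>x.
     let alpha = (\<lambda>i. if i \<le> m then x i else 0);
         beta = (\<lambda>j. if j \<le> n then x (m + 1 + j) else 0);
         a = (\<Sum>i\<le>m. x i);
         b = (\<Sum>j\<le>n. x (m + 1 + j))
     in if b = 0 then tu alpha
        else if a = 0 then sg beta
        else a *\<^sub>R tu (\<lambda>i. alpha i / a) + b *\<^sub>R sg (\<lambda>j. beta j / b))
   (standard_simplex (m + n + 1))"

definition conv_chain :: "nat \<Rightarrow> nat \<Rightarrow> 'a::real_vector qchain \<Rightarrow> 'a qchain \<Rightarrow> 'a qchain" where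
  "conv_chain m n c d = (\<Sum>t\<in>Poly_Mapping.keys c. \<Sum>s\<in>Poly_Mapping.keys d.
      Poly_Mapping.single (conv_simplex m n t s) (Poly_Mapping.lookup c t * Poly_Mapping.lookup d s))"

datatype 'a newt = Ch nat "'a qchain" | Sc complex

definition newton :: "complex \<Rightarrow> nat \<Rightarrow> ((nat \<Rightarrow> real) \<Rightarrow> 'a) \<Rightarrow> nat \<Rightarrow> 'a newt" where
  "newton q m tu i =
     (if i \<le> m then Ch (m - i) (qbdpow q i m (Poly_Mapping.single tu 1))
      else if i = m + 1 then Sc (qfact q (m + 1))
      else Sc 0)"

fun newt_prod :: "'a::real_vector newt \<Rightarrow> 'a newt \<Rightarrow> 'a qchain" where
  "newt_prod (Ch p c) (Ch r d) = conv_chain p r c d"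
| "newt_prod (Sc a) (Ch r d) = qsmult a d"
| "newt_prod (Ch p c) (Sc a) = qsmult a c"
| "newt_prod (Sc a) (Sc b) = 0"

end

theory Submission
  imports Defs
begin

text \<open>The border of a convex product satisfies the q-Leibniz rule
  \<open>\<partial>(A * B) = \<partial>A * B + q^(dim A + 1) A * \<partial>B\<close>, which follows from the fact that the faces of
  \<open>\<tau> * \<sigma>\<close> are the products of the faces of \<open>\<tau>\<close> with \<open>\<sigma>\<close> (first \<open>m + 1\<close> faces) and of
  \<open>\<tau>\<close> with the faces of \<open>\<sigma>\<close> (last \<open>n + 1\<close> faces, weighted by \<open>q^(m + 1)\<close>). The rule stays
  true for Newton terms once the border of a 0-chain is taken to be its augmentation, because
  the augmentation of \<open>\<partial>^m \<tau>\<close> is \<open>[m + 1]_q!\<close>; hence \<open>\<partial>\<N>^i = \<N>^(i+1)\<close>. Iterating the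
  rule \<open>k\<close> times produces the stated coefficients, which obey the q-Pascal recursion.\<close>

lemma lookup_qsmult [simp]: "Poly_Mapping.lookup (qsmult a c) s = a * Poly_Mapping.lookup c s"
  unfolding qsmult_def by transfer (simp add: when_def)

lemma qsmult_add: "qsmult a (x + y) = qsmult a x + qsmult a y"
  by (rule poly_mapping_eqI) (simp add: lookup_add algebra_simps)

lemma qsmult_add_left: "qsmult (a + b) x = qsmult a x + qsmult b x"
  by (rule poly_mapping_eqI) (simp add: lookup_add algebra_simps)

lemma qsmult_zero [simp]: "qsmult a 0 = 0"
  by (rule poly_mapping_eqI) simp

lemma qsmult_zero_left [simp]: "qsmult 0 x = 0"
  by (rule poly_mapping_eqI) simp

lemma qsmult_one [simp]: "qsmult 1 x = x"
  by (rule poly_mapping_eqI) simp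

lemma qsmult_qsmult [simp]: "qsmult a (qsmult b x) = qsmult (a * b) x"
  by (rule poly_mapping_eqI) (simp add: algebra_simps)

lemma qsmult_single: "qsmult a (Poly_Mapping.single s v) = Poly_Mapping.single s (a * v)"
  by (rule poly_mapping_eqI) (simp add: lookup_single when_def)

lemma qsmult_sum: "qsmult a (sum f S) = (\<Sum>x\<in>S. qsmult a (f x))"
  by (rule poly_mapping_eqI) (simp add: lookup_sum sum_distrib_left)

lemma sum_single_lookup: "(\<Sum>s\<in>Poly_Mapping.keys c. Poly_Mapping.single s (Poly_Mapping.lookup c s)) = c"
  by (rule poly_mapping_eqI) (auto simp: lookup_sum lookup_single when_def in_keys_iff)

lemma additive_sum:
  fixes Phi :: "'b::comm_monoid_add \<Rightarrow> 'c::cancel_comm_monoid_add"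
  assumes "\<And>x y. Phi (x + y) = Phi x + Phi y"
  shows "Phi (sum f S) = (\<Sum>i\<in>S. Phi (f i))"
proof -
  have "Phi 0 = 0"
    using assms[of 0 0] by simp
  with assms show ?thesis
    by (induction S rule: infinite_finite_induct) simp_all
qed

lemma additive_eq_on_singles:
  fixes Phi Psi :: "('k \<Rightarrow>\<^sub>0 'b::comm_monoid_add) \<Rightarrow> 'c::cancel_comm_monoid_add"
  assumes "\<And>x y. Phi (x + y) = Phi x + Phi y" and "\<And>x y. Psi (x + y) = Psi x + Psi y"
    and "\<And>s v. s \<in> Poly_Mapping.keys c \<Longrightarrow> Phi (Poly_Mapping.single s v) = Psi (Poly_Mapping.single s v)"
  shows "Phi c = Psi c"
proof -
  have expand: "F c = (\<Sum>s\<in>Poly_Mapping.keys c. F (Poly_Mapping.single s (Poly_Mapping.lookup c s)))"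
    if "\<And>x y. F (x + y) = F x + F y" for F :: "('k \<Rightarrow>\<^sub>0 'b) \<Rightarrow> 'c"
    using additive_sum[of F, OF that, of "\<lambda>s. Poly_Mapping.single s (Poly_Mapping.lookup c s)" "Poly_Mapping.keys c"]
    by (simp add: sum_single_lookup)
  show ?thesis
    using expand[of Phi] expand[of Psi] assms by simp
qed

definition chain_extend :: "('k \<Rightarrow> complex \<Rightarrow> 'b::comm_monoid_add) \<Rightarrow> ('k \<Rightarrow>\<^sub>0 complex) \<Rightarrow> 'b" where
  "chain_extend F c = (\<Sum>s\<in>Poly_Mapping.keys c. F s (Poly_Mapping.lookup c s))"

lemma chain_extend_single: "F s 0 = 0 \<Longrightarrow> chain_extend F (Poly_Mapping.single s v) = F s v"
  by (simp add: chain_extend_def)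

lemma chain_extend_superset:
  assumes "finite S" "Poly_Mapping.keys c \<subseteq> S" "\<And>s. F s 0 = 0"
  shows "chain_extend F c = (\<Sum>s\<in>S. F s (Poly_Mapping.lookup c s))"
  unfolding chain_extend_def using assms
  by (intro sum.mono_neutral_left) (auto simp: in_keys_iff)

lemma chain_extend_add:
  fixes F :: "'k \<Rightarrow> complex \<Rightarrow> 'b::cancel_comm_monoid_add"
  assumes "\<And>s x y. F s (x + y) = F s x + F s y"
  shows "chain_extend F (a + b) = chain_extend F a + chain_extend F b"
proof -
  have F0: "F s 0 = 0" for s
    using assms[of s 0 0] by simp
  let ?S = "Poly_Mapping.keys a \<union> Poly_Mapping.keys b"
  have "chain_extend F (a + b) = (\<Sum>s\<in>?S. F s (Poly_Mapping.lookup (a + b) s))"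
    by (rule chain_extend_superset) (use keys_add[of a b] F0 in auto)
  also have "\<dots> = (\<Sum>s\<in>?S. F s (Poly_Mapping.lookup a s)) + (\<Sum>s\<in>?S. F s (Poly_Mapping.lookup b s))"
    by (simp add: lookup_add assms sum.distrib)
  also have "\<dots> = chain_extend F a + chain_extend F b"
    by (subst (1 2) chain_extend_superset[where S = ?S]) (use F0 in auto)
  finally show ?thesis .
qed

lemma qbd_eq_chain_extend:
  "qbd q p c = (if p = 0 then 0
     else chain_extend (\<lambda>s v. \<Sum>j\<le>p. Poly_Mapping.single (singular_face p j s) (q ^ j * v)) c)"
  by (simp add: qbd_def chain_extend_def)

lemma qbd_dim_0 [simp]: "qbd q 0 c = 0"
  by (simp add: qbd_def)

lemma qbd_zero [simp]: "qbd q p 0 = 0"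
  by (simp add: qbd_def)

lemma qbd_add: "qbd q p (x + y) = qbd q p x + qbd q p y"
  by (simp add: qbd_eq_chain_extend chain_extend_add single_add distrib_left sum.distrib)

lemma qbd_sum: "qbd q p (sum f S) = (\<Sum>i\<in>S. qbd q p (f i))"
  by (rule additive_sum) (rule qbd_add)

lemma qbd_single:
  "p \<noteq> 0 \<Longrightarrow> qbd q p (Poly_Mapping.single s v)
     = (\<Sum>j\<le>p. Poly_Mapping.single (singular_face p j s) (q ^ j * v))"
  by (simp add: qbd_eq_chain_extend chain_extend_single)

lemma qbd_qsmult: "qbd q p (qsmult a x) = qsmult a (qbd q p x)"
  by (rule additive_eq_on_singles[where c = x], simp_all add: qbd_add qsmult_add)
     (cases "p = 0"; simp add: qsmult_single qbd_single qsmult_sum mult.left_commute)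

lemma conv_chain_eq_chain_extend:
  "conv_chain m n c d
     = chain_extend (\<lambda>t v. chain_extend (\<lambda>s w. Poly_Mapping.single (conv_simplex m n t s) (v * w)) d) c"
  by (simp add: conv_chain_def chain_extend_def)

lemma conv_chain_add_left: "conv_chain m n (c + c') d = conv_chain m n c d + conv_chain m n c' d"
  unfolding conv_chain_eq_chain_extend
  by (rule chain_extend_add) (simp add: chain_extend_def single_add distrib_right sum.distrib)

lemma conv_chain_add_right: "conv_chain m n c (d + d') = conv_chain m n c d + conv_chain m n c d'"
  unfolding conv_chain_eq_chain_extend
  by (subst (1 2 3) chain_extend_def) (simp add: chain_extend_add single_add distrib_left sum.distrib)

lemma conv_chain_single:
  "conv_chain m n (Poly_Mapping.single t v) (Poly_Mapping.single s w)
     = Poly_Mapping.single (conv_simplex m n t s) (v * w)"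
  by (simp add: conv_chain_eq_chain_extend chain_extend_single)

lemma conv_chain_sum_left: "conv_chain m n (sum f S) d = (\<Sum>i\<in>S. conv_chain m n (f i) d)"
  by (rule additive_sum) (rule conv_chain_add_left)

lemma conv_chain_sum_right: "conv_chain m n c (sum f S) = (\<Sum>i\<in>S. conv_chain m n c (f i))"
  by (rule additive_sum) (rule conv_chain_add_right)

definition augmentation :: "'a qchain \<Rightarrow> complex" where
  "augmentation c = chain_extend (\<lambda>s v. v) c"

lemma augmentation_add: "augmentation (x + y) = augmentation x + augmentation y"
  unfolding augmentation_def by (rule chain_extend_add) simp

lemma augmentation_single [simp]: "augmentation (Poly_Mapping.single s v) = v"
  by (simp add: augmentation_def chain_extend_single)

lemma augmentation_qbd:
  assumes "p \<noteq> 0"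
  shows "augmentation (qbd q p c) = qint q (Suc p) * augmentation c"
proof -
  have "augmentation (qbd q p c) = (\<Sum>s\<in>Poly_Mapping.keys c. \<Sum>j\<le>p. q ^ j * Poly_Mapping.lookup c s)"
    using assms by (simp add: qbd_def additive_sum[of augmentation, OF augmentation_add])
  also have "\<dots> = qint q (Suc p) * augmentation c"
    by (simp add: qint_def augmentation_def chain_extend_def sum_distrib_left sum_distrib_right
        lessThan_Suc_atMost)
  finally show ?thesis .
qed

lemma sum_atMost_add_Suc_split:
  fixes f :: "nat \<Rightarrow> 'b::comm_monoid_add"
  shows "(\<Sum>i\<le>m + n + 1. f i) = (\<Sum>i\<le>m. f i) + (\<Sum>j\<le>n. f (m + 1 + j))"
  by (induction n) (simp_all add: add.assoc)

lemma sum_simplical_face: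
  fixes y :: "nat \<Rightarrow> 'b::comm_monoid_add"
  shows "j \<le> p \<Longrightarrow> (\<Sum>i\<le>p. simplical_face j y i) = (\<Sum>i<p. y i)"
proof (induction p)
  case 0 then show ?case by (simp add: simplical_face_def)
next
  case (Suc p)
  show ?case
  proof (cases "j \<le> p")
    case True
    then show ?thesis using Suc by (simp add: simplical_face_def)
  next
    case False
    then have "j = Suc p" using Suc by simp
    then show ?thesis by (simp add: simplical_face_def lessThan_Suc_atMost)
  qed
qed

lemma scaled_in_standard_simplex:
  assumes "\<And>i. 0 \<le> z i" "\<And>i. i > m \<Longrightarrow> z i = 0" "(\<Sum>i\<le>m. z i) \<noteq> 0"
  shows "(\<lambda>i. z i / (\<Sum>i\<le>m. z i)) \<in> standard_simplex m"
proof -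
  let ?s = "\<Sum>i\<le>m. z i"
  have s0: "?s > 0" using assms(1,3) by (metis order_le_less sum_nonneg)
  have le: "z i \<le> ?s" for i
  proof (cases "i \<le> m")
    case True then show ?thesis using assms(1) by (intro member_le_sum) auto
  next
    case False then show ?thesis using assms(2) s0 by simp
  qed
  show ?thesis unfolding standard_simplex_def
    using s0 le assms(1,2) by (auto simp: sum_divide_distrib[symmetric])
qed

lemma standard_simplex_split:
  assumes y: "y \<in> standard_simplex (m + n + 1)"
  defines "a \<equiv> \<Sum>i\<le>m. y i" and "b \<equiv> \<Sum>j\<le>n. y (m + 1 + j)"
  shows "a + b = 1"
    "a \<noteq> 0 \<Longrightarrow> (\<lambda>i. (if i \<le> m then y i else 0) / a) \<in> standard_simplex m"
    "b \<noteq> 0 \<Longrightarrow> (\<lambda>j. (if j \<le> n then y (m + 1 + j) else 0) / b) \<in> standard_simplex n"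
proof -
  have nn: "0 \<le> y i" for i using y by (simp add: standard_simplex_def)
  have "(\<Sum>i\<le>m + n + 1. y i) = 1" using y by (simp add: standard_simplex_def)
  then show "a + b = 1" unfolding a_def b_def by (simp only: sum_atMost_add_Suc_split)
  show "a \<noteq> 0 \<Longrightarrow> (\<lambda>i. (if i \<le> m then y i else 0) / a) \<in> standard_simplex m"
  proof -
    assume a: "a \<noteq> 0"
    have "(\<Sum>i\<le>m. (if i \<le> m then y i else 0)) = a" by (simp add: a_def)
    then show ?thesis using scaled_in_standard_simplex[of "\<lambda>i. if i \<le> m then y i else 0" m] a nn by auto
  qed
  show "b \<noteq> 0 \<Longrightarrow> (\<lambda>j. (if j \<le> n then y (m + 1 + j) else 0) / b) \<in> standard_simplex n"
  proof -
    assume b: "b \<noteq> 0"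
    have "(\<Sum>i\<le>n. (if i \<le> n then y (m + 1 + i) else 0)) = b" by (simp add: b_def)
    then show ?thesis using scaled_in_standard_simplex[of "\<lambda>i. if i \<le> n then y (m + 1 + i) else 0" n] b nn by auto
  qed
qed

lemma singular_face_conv_simplex_left:
  assumes j: "j \<le> Suc p"
  shows "singular_face (Suc p + r + 1) j (conv_simplex (Suc p) r t s) = conv_simplex p r (singular_face (Suc p) j t) s"
proof -
  have pointwise: "conv_simplex (Suc p) r t s (simplical_face j y) = conv_simplex p r (singular_face (Suc p) j t) s y"
    if y: "y \<in> standard_simplex (p + r + 1)" for y
  proof -
    have face_in_simplex: "simplical_face j y \<in> standard_simplex (Suc p + r + 1)"
      using simplical_face_in_standard_simplex[of "Suc p + r + 1" j y] y j by simp
    define a where "a = (\<Sum>i\<le>p. y i)"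
    define b where "b = (\<Sum>k\<le>r. y (p + 1 + k))"
    define al where "al = (\<lambda>i. if i \<le> p then y i else 0)"
    define be where "be = (\<lambda>k. if k \<le> r then y (p + 1 + k) else 0)"
    have sum_left: "(\<Sum>i\<le>Suc p. simplical_face j y i) = a"
      using sum_simplical_face[OF j, of y] by (simp add: a_def lessThan_Suc_atMost)
    have sum_right: "(\<Sum>k\<le>r. simplical_face j y (Suc p + 1 + k)) = b"
      using j by (simp add: b_def simplical_face_def)
    have left_part: "(\<lambda>i. if i \<le> Suc p then simplical_face j y i else 0) = simplical_face j al"
      using j by (auto simp: simplical_face_def al_def fun_eq_iff)
    have right_part: "(\<lambda>k. if k \<le> r then simplical_face j y (Suc p + 1 + k) else 0) = be"
      using j by (auto simp: simplical_face_def be_def fun_eq_iff)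
    have face_scaled: "(\<lambda>i. simplical_face j al i / a) = simplical_face j (\<lambda>i. al i / a)"
      by (auto simp: simplical_face_def fun_eq_iff)
    have parts_sum: "a + b = 1" and left_scaled: "a \<noteq> 0 \<Longrightarrow> (\<lambda>i. al i / a) \<in> standard_simplex p"
      using standard_simplex_split[OF y] by (simp_all add: a_def b_def al_def)
    have face_point: "conv_simplex (Suc p) r t s (simplical_face j y) =
      (if b = 0 then t (simplical_face j al)
       else if a = 0 then s be
       else a *\<^sub>R t (\<lambda>i. simplical_face j al i / a) + b *\<^sub>R s (\<lambda>k. be k / b))"
      unfolding conv_simplex_def Let_def restrict_apply' [OF face_in_simplex] sum_left sum_right left_part right_part
      by (simp only: fun_cong[OF left_part] fun_cong[OF right_part])
    have conv_point: "conv_simplex p r (singular_face (Suc p) j t) s y =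
      (if b = 0 then singular_face (Suc p) j t al
       else if a = 0 then s be
       else a *\<^sub>R singular_face (Suc p) j t (\<lambda>i. al i / a) + b *\<^sub>R s (\<lambda>k. be k / b))"
      unfolding conv_simplex_def Let_def restrict_apply' [OF y] a_def b_def al_def be_def ..
    show ?thesis
    proof (cases "b = 0")
      case True
      then have "a = 1" using parts_sum by simp
      then have "al \<in> standard_simplex p" using left_scaled by simp
      then show ?thesis using True face_point conv_point by (simp add: singular_face_def)
    next
      case False
      then show ?thesis using face_point conv_point left_scaled by (simp add: singular_face_def face_scaled)
    qed
  qed
  show ?thesis
    unfolding singular_face_def[of "Suc p + r + 1"]
    by (rule ext) (use pointwise in \<open>simp add: conv_simplex_def[of p r] restrict_def\<close>)
qed

lemma singular_face_conv_simplex_right: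
  assumes j: "j \<le> Suc r"
  shows "singular_face (p + Suc r + 1) (p + 1 + j) (conv_simplex p (Suc r) t s) = conv_simplex p r t (singular_face (Suc r) j s)"
proof -
  have pointwise: "conv_simplex p (Suc r) t s (simplical_face (p + 1 + j) y) = conv_simplex p r t (singular_face (Suc r) j s) y"
    if y: "y \<in> standard_simplex (p + r + 1)" for y
  proof -
    have face_in_simplex: "simplical_face (p + 1 + j) y \<in> standard_simplex (p + Suc r + 1)"
      using simplical_face_in_standard_simplex[of "p + Suc r + 1" "p + 1 + j" y] y j by simp
    define a where "a = (\<Sum>i\<le>p. y i)"
    define b where "b = (\<Sum>k\<le>r. y (p + 1 + k))"
    define al where "al = (\<lambda>i. if i \<le> p then y i else 0)"
    define be where "be = (\<lambda>k. if k \<le> r then y (p + 1 + k) else 0)"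
    have sum_left: "(\<Sum>i\<le>p. simplical_face (p + 1 + j) y i) = a"
      by (simp add: a_def simplical_face_def)
    have face_shift: "simplical_face (p + 1 + j) y (p + 1 + k) = simplical_face j (\<lambda>k. y (p + 1 + k)) k" for k
      by (auto simp: simplical_face_def)
    have sum_right: "(\<Sum>k\<le>Suc r. simplical_face (p + 1 + j) y (p + 1 + k)) = b"
      unfolding face_shift using sum_simplical_face[OF j, of "\<lambda>k. y (p + 1 + k)"] by (simp add: b_def lessThan_Suc_atMost)
    have left_part: "(\<lambda>i. if i \<le> p then simplical_face (p + 1 + j) y i else 0) = al"
      by (auto simp: simplical_face_def al_def fun_eq_iff)
    have right_part: "(\<lambda>k. if k \<le> Suc r then simplical_face (p + 1 + j) y (p + 1 + k) else 0) = simplical_face j be"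
      using j by (auto simp: simplical_face_def be_def fun_eq_iff)
    have face_scaled: "(\<lambda>i. simplical_face j be i / b) = simplical_face j (\<lambda>i. be i / b)"
      by (auto simp: simplical_face_def fun_eq_iff)
    have parts_sum: "a + b = 1" and right_scaled: "b \<noteq> 0 \<Longrightarrow> (\<lambda>i. be i / b) \<in> standard_simplex r"
      using standard_simplex_split[OF y] by (simp_all add: a_def b_def be_def)
    have face_point: "conv_simplex p (Suc r) t s (simplical_face (p + 1 + j) y) =
      (if b = 0 then t al
       else if a = 0 then s (simplical_face j be)
       else a *\<^sub>R t (\<lambda>i. al i / a) + b *\<^sub>R s (\<lambda>k. simplical_face j be k / b))"
      unfolding conv_simplex_def Let_def restrict_apply' [OF face_in_simplex] sum_left sum_right left_part right_part
      by (simp only: fun_cong[OF left_part] fun_cong[OF right_part])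
    have conv_point: "conv_simplex p r t (singular_face (Suc r) j s) y =
      (if b = 0 then t al
       else if a = 0 then singular_face (Suc r) j s be
       else a *\<^sub>R t (\<lambda>i. al i / a) + b *\<^sub>R singular_face (Suc r) j s (\<lambda>k. be k / b))"
      unfolding conv_simplex_def Let_def restrict_apply' [OF y] a_def b_def al_def be_def ..
    show ?thesis
    proof (cases "b = 0")
      case True
      then show ?thesis using face_point conv_point by simp
    next
      case False
      show ?thesis
      proof (cases "a = 0")
        case True
        then have "b = 1" using parts_sum by simp
        then have "be \<in> standard_simplex r" using right_scaled by simp
        then show ?thesis using True False face_point conv_point by (simp add: singular_face_def)
      next
        case False
        then show ?thesis using \<open>b \<noteq> 0\<close> face_point conv_point right_scaled by (simp add: singular_face_def face_scaled)
      qed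
    qed
  qed
  show ?thesis
    unfolding singular_face_def[of "p + Suc r + 1"]
    by (rule ext) (use pointwise in \<open>simp add: conv_simplex_def[of p r] restrict_def\<close>)
qed

lemma singular_face_conv_simplex_first:
  assumes "s \<in> extensional (standard_simplex r)"
  shows "singular_face (r + 1) 0 (conv_simplex 0 r t s) = s"
proof (rule ext)
  fix y
  show "singular_face (r + 1) 0 (conv_simplex 0 r t s) y = s y"
  proof (cases "y \<in> standard_simplex r")
    case True
    have yf: "simplical_face 0 y \<in> standard_simplex (0 + r + 1)"
      using simplical_face_in_standard_simplex[of "r + 1" 0 y] True by simp
    have b: "(\<Sum>k\<le>r. y k) = 1" using True by (simp add: standard_simplex_def)
    have be: "(\<lambda>k. if k \<le> r then y k else 0) = y" using True by (auto simp: standard_simplex_def fun_eq_iff)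
    have "(\<lambda>k. if k \<le> r then simplical_face 0 y (0 + 1 + k) else 0) = y"
      using True by (auto simp: standard_simplex_def fun_eq_iff simplical_face_def)
    moreover have "(\<Sum>k\<le>r. simplical_face 0 y (0 + 1 + k)) = 1" using b by (simp add: simplical_face_def)
    moreover have yf': "simplical_face 0 y \<in> standard_simplex (Suc r)" using yf by simp
    moreover have "simplical_face 0 y 0 = 0" by (simp add: simplical_face_def)
    ultimately show ?thesis using True
      unfolding singular_face_def conv_simplex_def Let_def
      by (simp add: restrict_apply')
  next
    case False
    then show ?thesis using assms by (simp add: singular_face_def extensional_def)
  qed
qed

lemma singular_face_conv_simplex_last:
  assumes "t \<in> extensional (standard_simplex p)"
  shows "singular_face (p + 0 + 1) (p + 1) (conv_simplex p 0 t s) = t"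
proof (rule ext)
  fix y
  show "singular_face (p + 0 + 1) (p + 1) (conv_simplex p 0 t s) y = t y"
  proof (cases "y \<in> standard_simplex p")
    case True
    have yf: "simplical_face (p + 1) y \<in> standard_simplex (p + 0 + 1)"
      using simplical_face_in_standard_simplex[of "p + 1" "p + 1" y] True by simp
    have yf': "simplical_face (Suc p) y \<in> standard_simplex (Suc p)" using yf by simp
    have al: "(\<lambda>i. if i \<le> p then simplical_face (Suc p) y i else 0) = y"
      using True by (auto simp: standard_simplex_def fun_eq_iff simplical_face_def)
    have "simplical_face (p + 1) y (p + 1 + 0) = 0" by (simp add: simplical_face_def)
    then show ?thesis using True al
      unfolding singular_face_def conv_simplex_def Let_def
      by (simp add: restrict_apply' yf')
  next
    case False
    then show ?thesis using assms by (simp add: singular_face_def extensional_def)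
  qed
qed

fun newt_border :: "complex \<Rightarrow> 'a newt \<Rightarrow> 'a newt" where
  "newt_border q (Ch p c) = (if p = 0 then Sc (augmentation c) else Ch (p - 1) (qbd q p c))"
| "newt_border q (Sc a) = Sc 0"

text \<open>Scalars get dimension \<open>-1\<close>, so that the Leibniz weight \<open>q^(dim A + 1)\<close> is \<open>1\<close> for them.\<close>

fun newt_dim :: "'a newt \<Rightarrow> int" where
  "newt_dim (Ch p c) = int p"
| "newt_dim (Sc a) = -1"

fun newt_extensional :: "'a newt \<Rightarrow> bool" where
  "newt_extensional (Ch p c) = (\<forall>t\<in>Poly_Mapping.keys c. t \<in> extensional (standard_simplex p))"
| "newt_extensional (Sc a) = True"

lemma newt_prod_Sc_0 [simp]: "newt_prod (Sc 0) B = 0" "newt_prod A (Sc 0) = 0"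
  by (cases B; simp) (cases A; simp)

lemma qbd_conv_chain_single:
  assumes t: "t \<in> extensional (standard_simplex p)" and s: "s \<in> extensional (standard_simplex r)"
  shows "qbd q (p + r + 1) (conv_chain p r (Poly_Mapping.single t v) (Poly_Mapping.single s w))
    = newt_prod (newt_border q (Ch p (Poly_Mapping.single t v))) (Ch r (Poly_Mapping.single s w))
      + qsmult (q ^ (p + 1))
          (newt_prod (Ch p (Poly_Mapping.single t v)) (newt_border q (Ch r (Poly_Mapping.single s w))))"
proof -
  let ?face = "\<lambda>j. singular_face (p + r + 1) j (conv_simplex p r t s)"
  have "qbd q (p + r + 1) (conv_chain p r (Poly_Mapping.single t v) (Poly_Mapping.single s w))
      = (\<Sum>j\<le>p + r + 1. Poly_Mapping.single (?face j) (q ^ j * (v * w)))"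
    by (simp add: conv_chain_single qbd_single del: One_nat_def sum.atMost_Suc atMost_Suc)
  also have "\<dots> = (\<Sum>j\<le>p. Poly_Mapping.single (?face j) (q ^ j * (v * w)))
     + (\<Sum>k\<le>r. Poly_Mapping.single (?face (p + 1 + k)) (q ^ (p + 1 + k) * (v * w)))"
    by (rule sum_atMost_add_Suc_split)
  also have "(\<Sum>j\<le>p. Poly_Mapping.single (?face j) (q ^ j * (v * w)))
      = newt_prod (newt_border q (Ch p (Poly_Mapping.single t v))) (Ch r (Poly_Mapping.single s w))"
  proof (cases p)
    case 0
    then show ?thesis
      using singular_face_conv_simplex_first[OF s, of t] by (simp add: qsmult_single)
  next
    case (Suc p')
    have "(\<Sum>j\<le>p. Poly_Mapping.single (?face j) (q ^ j * (v * w)))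
       = (\<Sum>j\<le>p. Poly_Mapping.single (conv_simplex p' r (singular_face p j t) s) (q ^ j * v * w))"
      using singular_face_conv_simplex_left[of _ p' r t s] Suc by (intro sum.cong) (auto simp: mult.assoc)
    then show ?thesis
      using Suc by (simp add: qbd_single conv_chain_sum_left conv_chain_single
          del: One_nat_def sum.atMost_Suc atMost_Suc)
  qed
  also have "(\<Sum>k\<le>r. Poly_Mapping.single (?face (p + 1 + k)) (q ^ (p + 1 + k) * (v * w)))
      = qsmult (q ^ (p + 1))
          (newt_prod (Ch p (Poly_Mapping.single t v)) (newt_border q (Ch r (Poly_Mapping.single s w))))"
  proof (cases r)
    case 0
    then show ?thesis
      using singular_face_conv_simplex_last[OF t, of s] by (simp add: qsmult_single mult_ac)
  next
    case (Suc r')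
    have "(\<Sum>k\<le>r. Poly_Mapping.single (?face (p + 1 + k)) (q ^ (p + 1 + k) * (v * w)))
       = (\<Sum>k\<le>r. Poly_Mapping.single (conv_simplex p r' t (singular_face r k s)) (q ^ (p + 1) * (v * (q ^ k * w))))"
      using singular_face_conv_simplex_right[of _ r' p t s] Suc
      by (intro sum.cong) (auto simp: power_add mult_ac)
    then show ?thesis
      using Suc by (simp add: qbd_single conv_chain_sum_right conv_chain_single qsmult_sum qsmult_single
          del: One_nat_def sum.atMost_Suc atMost_Suc)
  qed
  finally show ?thesis .
qed

lemma qbd_conv_chain:
  assumes c: "newt_extensional (Ch p c)" and d: "newt_extensional (Ch r d)"
  shows "qbd q (p + r + 1) (conv_chain p r c d)
    = newt_prod (newt_border q (Ch p c)) (Ch r d)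
      + qsmult (q ^ (p + 1)) (newt_prod (Ch p c) (newt_border q (Ch r d)))"
proof -
  note additive = qbd_add conv_chain_add_left conv_chain_add_right qsmult_add qsmult_add_left
    augmentation_add
  have on_singles: "qbd q (p + r + 1) (conv_chain p r (Poly_Mapping.single t v) d)
    = newt_prod (newt_border q (Ch p (Poly_Mapping.single t v))) (Ch r d)
      + qsmult (q ^ (p + 1)) (newt_prod (Ch p (Poly_Mapping.single t v)) (newt_border q (Ch r d)))"
    if t: "t \<in> extensional (standard_simplex p)" for t v
    by (rule additive_eq_on_singles[where c = d]; (cases p; cases r; simp add: additive add_ac; fail)?)
       (use qbd_conv_chain_single[OF t] d in auto)
  show ?thesis
    by (rule additive_eq_on_singles[where c = c]; (cases p; cases r; simp add: additive add_ac; fail)?)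
       (use on_singles c in auto)
qed

lemma qbd_newt_prod:
  assumes "newt_extensional A" "newt_extensional B"
  shows "qbd q (nat (newt_dim A + newt_dim B + 1)) (newt_prod A B)
    = newt_prod (newt_border q A) B + qsmult (q ^ nat (newt_dim A + 1)) (newt_prod A (newt_border q B))"
proof (cases A; cases B)
  fix p c r d
  assume "A = Ch p c" "B = Ch r d"
  moreover have "nat (int p + int r + 1) = p + r + 1" "nat (int p + 1) = p + 1"
    by auto
  ultimately show ?thesis
    using qbd_conv_chain[of p c r d q] assms by simp
qed (auto simp: qbd_qsmult)

lemma keys_qbd_subset:
  "Poly_Mapping.keys (qbd q p c) \<subseteq> (\<Union>s\<in>Poly_Mapping.keys c. \<Union>j\<le>p. {singular_face p j s})"
proof (cases "p = 0")
  case False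
  have "Poly_Mapping.keys (qbd q p c) \<subseteq> (\<Union>s\<in>Poly_Mapping.keys c.
      Poly_Mapping.keys (\<Sum>j\<le>p. Poly_Mapping.single (singular_face p j s) (q ^ j * Poly_Mapping.lookup c s)))"
    using False unfolding qbd_def by (simp only: if_False) (rule keys_sum)
  also have "\<dots> \<subseteq> (\<Union>s\<in>Poly_Mapping.keys c. \<Union>j\<le>p.
      Poly_Mapping.keys (Poly_Mapping.single (singular_face p j s) (q ^ j * Poly_Mapping.lookup c s)))"
    by (intro UN_mono order_refl keys_sum)
  also have "\<dots> \<subseteq> (\<Union>s\<in>Poly_Mapping.keys c. \<Union>j\<le>p. {singular_face p j s})"
    by (intro UN_mono order_refl) simp
  finally show ?thesis .
qed simp

lemma newt_extensional_newton:
  assumes "tu \<in> extensional (standard_simplex m)"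
  shows "newt_extensional (newton q m tu i)"
proof -
  have "\<forall>t\<in>Poly_Mapping.keys (qbdpow q i m (Poly_Mapping.single tu 1)). t \<in> extensional (standard_simplex (m - i))"
    if "i \<le> m" for i
    using that
  proof (induction i)
    case 0
    then show ?case using assms by simp
  next
    case (Suc i)
    then show ?case
      using keys_qbd_subset[of q "m - i"] by (fastforce simp: singular_face_def diff_diff_left)
  qed
  then show ?thesis
    by (simp add: newton_def)
qed

lemma augmentation_qbdpow:
  "i \<le> m \<Longrightarrow> augmentation (qbdpow q i m (Poly_Mapping.single tu 1)) = (\<Prod>l\<in>{m + 1 - i<..m + 1}. qint q l)"
proof (induction i)
  case 0
  then show ?case by simp
next
  case (Suc i)
  have "{m - i<..Suc m} = insert (Suc (m - i)) {Suc m - i<..Suc m}"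
    using Suc.prems by auto
  with Suc show ?case
    by (simp add: augmentation_qbd)
qed

lemma qfact_Suc_eq_prod: "qfact q (Suc m) = (\<Prod>l\<in>{1<..Suc m}. qint q l)"
proof -
  have "{1..Suc m} = insert 1 {1<..Suc m}"
    by auto
  then show ?thesis
    by (simp add: qfact_def qint_def)
qed

lemma newt_border_newton: "newt_border q (newton q m tu i) = newton q m tu (Suc i)"
proof -
  consider "i < m" | "i = m" | "m < i"
    by linarith
  then show ?thesis
  proof cases
    case 1
    then show ?thesis by (simp add: newton_def Suc_diff_Suc)
  next
    case 2
    then show ?thesis
      using augmentation_qbdpow[of m m q tu] by (simp add: newton_def qfact_Suc_eq_prod)
  qed (simp add: newton_def)
qed

lemma newton_eq_Sc_0: "m + 2 \<le> j \<Longrightarrow> newton q m tu j = Sc 0"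
  by (simp add: newton_def)

lemma newt_dim_newton: "j \<le> m + 1 \<Longrightarrow> newt_dim (newton q m tu j) = int m - int j"
  by (simp add: newton_def)

lemma qbd_newton_prod:
  assumes "tu \<in> extensional (standard_simplex m)" "sg \<in> extensional (standard_simplex n)"
    and "i \<le> k"
  shows "qbd q (m + n + 1 - k) (newt_prod (newton q m tu (k - i)) (newton q n sg i))
    = newt_prod (newton q m tu (Suc k - i)) (newton q n sg i)
      + qsmult (q powi (int m + 1 - int k + int i))
          (newt_prod (newton q m tu (k - i)) (newton q n sg (Suc i)))"
proof -
  consider "m + 2 \<le> k - i" | "n + 2 \<le> i" | "k - i = m + 1" "i = n + 1"
    | "k - i \<le> m + 1" "i \<le> n + 1" "\<not> (k - i = m + 1 \<and> i = n + 1)"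
    by linarith
  then show ?thesis
  proof cases
    case 3
    moreover have "Suc k - i = m + 2"
      using 3 \<open>i \<le> k\<close> by linarith
    ultimately have "newton q m tu (k - i) = Sc (qfact q (m + 1))" "newton q n sg i = Sc (qfact q (n + 1))"
      "newton q m tu (Suc k - i) = Sc 0" "newton q n sg (Suc i) = Sc 0"
      by (simp_all add: newton_def)
    then show ?thesis
      by simp
  next
    case 4
    have "nat (newt_dim (newton q m tu (k - i)) + newt_dim (newton q n sg i) + 1) = m + n + 1 - k"
      "nat (newt_dim (newton q m tu (k - i)) + 1) = nat (int m + 1 - int k + int i)"
      using 4 \<open>i \<le> k\<close> by (simp_all add: newt_dim_newton)
    moreover have "int m + 1 - int k + int i \<ge> 0"
      using 4 \<open>i \<le> k\<close> by linarith
    ultimately show ?thesis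
      using qbd_newt_prod[of "newton q m tu (k - i)" "newton q n sg i" q] assms
      by (simp add: newt_extensional_newton newt_border_newton Suc_diff_le power_int_def)
  qed (use \<open>i \<le> k\<close> in \<open>simp_all add: newton_eq_Sc_0\<close>)
qed

lemma sum_pascal_recombine:
  fixes T :: "nat \<Rightarrow> nat \<Rightarrow> 'a qchain"
  assumes "c (Suc k) 0 = c k 0" and "c k (Suc k) = 0"
    and "\<And>i. c (Suc k) (Suc i) = c k (Suc i) + c k i * w i"
  shows "(\<Sum>i\<le>k. qsmult (c k i) (T (Suc k - i) i + qsmult (w i) (T (k - i) (Suc i))))
       = (\<Sum>i\<le>Suc k. qsmult (c (Suc k) i) (T (Suc k - i) i))"
proof -
  have "(\<Sum>i\<le>k. qsmult (c k i) (T (Suc k - i) i)) = (\<Sum>i\<le>Suc k. qsmult (c k i) (T (Suc k - i) i))"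
    using assms(2) by simp
  also have "\<dots> = qsmult (c k 0) (T (Suc k) 0) + (\<Sum>i\<le>k. qsmult (c k (Suc i)) (T (k - i) (Suc i)))"
    by (subst sum.atMost_Suc_shift) simp
  finally have "(\<Sum>i\<le>k. qsmult (c k i) (T (Suc k - i) i + qsmult (w i) (T (k - i) (Suc i))))
      = qsmult (c (Suc k) 0) (T (Suc k) 0)
        + (\<Sum>i\<le>k. qsmult (c k (Suc i) + c k i * w i) (T (k - i) (Suc i)))"
    by (simp add: assms(1) qsmult_add qsmult_add_left sum.distrib add.assoc)
  also have "\<dots> = (\<Sum>i\<le>Suc k. qsmult (c (Suc k) i) (T (Suc k - i) i))"
    by (subst sum.atMost_Suc_shift) (simp add: assms(3))
  finally show ?thesis .
qed

definition newton_coeff :: "complex \<Rightarrow> nat \<Rightarrow> nat \<Rightarrow> nat \<Rightarrow> complex" where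
  "newton_coeff q m k i = q powi (int i * (int m + 1 - int k + int i)) * qbinom q k i"

lemma qbinom_eq_0: "n < k \<Longrightarrow> qbinom q n k = 0"
proof (induction n arbitrary: k)
  case 0
  then show ?case by (cases k) auto
next
  case (Suc n)
  then show ?case by (cases k) auto
qed

lemma newton_coeff_Suc_0: "newton_coeff q m (Suc k) 0 = newton_coeff q m k 0"
  by (simp add: newton_coeff_def)

lemma newton_coeff_eq_0: "k < i \<Longrightarrow> newton_coeff q m k i = 0"
  by (simp add: newton_coeff_def qbinom_eq_0)

lemma newton_coeff_Suc_Suc:
  assumes "q \<noteq> 0"
  shows "newton_coeff q m (Suc k) (Suc i)
    = newton_coeff q m k (Suc i) + newton_coeff q m k i * q powi (int m + 1 - int k + int i)"
proof -
  define e where "e = int m + 1 - int k + int i"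
  have exp_left: "int (Suc i) * (int m + 1 - int (Suc k) + int (Suc i)) = (int i + 1) * e"
    by (simp add: e_def algebra_simps)
  have exp_right: "int (Suc i) * (int m + 1 - int k + int (Suc i)) = (int i + 1) * e + int (Suc i)"
    by (simp add: e_def algebra_simps)
  have power_right: "q powi ((int i + 1) * e + int (Suc i)) = q powi ((int i + 1) * e) * q ^ Suc i"
    using assms by (simp add: power_int_add power_int_of_nat del: of_nat_Suc)
  have "q powi (int i * e) * q powi e = q powi ((int i + 1) * e)"
    using assms by (simp add: power_int_add[symmetric] algebra_simps)
  then show ?thesis
    unfolding newton_coeff_def exp_left exp_right power_right e_def[symmetric]
    by (simp add: algebra_simps)
qed

lemma qbdpow_conv_simplex:
  assumes "q \<noteq> 0"
    and ext: "tu \<in> extensional (standard_simplex m)" "sg \<in> extensional (standard_simplex n)"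
  shows "qbdpow q k (m + n + 1) (Poly_Mapping.single (conv_simplex m n tu sg) 1)
       = (\<Sum>i\<le>k. qsmult (newton_coeff q m k i) (newt_prod (newton q m tu (k - i)) (newton q n sg i)))"
proof (induction k)
  case 0
  then show ?case by (simp add: newton_coeff_def newton_def conv_chain_single)
next
  case (Suc k)
  define T where "T j i = newt_prod (newton q m tu j) (newton q n sg i)" for j i
  from Suc have "qbdpow q (Suc k) (m + n + 1) (Poly_Mapping.single (conv_simplex m n tu sg) 1)
      = (\<Sum>i\<le>k. qsmult (newton_coeff q m k i) (qbd q (m + n + 1 - k) (T (k - i) i)))"
    by (simp add: T_def qbd_sum qbd_qsmult)
  also have "\<dots> = (\<Sum>i\<le>k. qsmult (newton_coeff q m k i) (T (Suc k - i) i
      + qsmult (q powi (int m + 1 - int k + int i)) (T (k - i) (Suc i))))"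
    unfolding T_def using qbd_newton_prod[OF ext] by (intro sum.cong refl) simp
  also have "\<dots> = (\<Sum>i\<le>Suc k. qsmult (newton_coeff q m (Suc k) i) (T (Suc k - i) i))"
    by (rule sum_pascal_recombine)
       (simp_all add: newton_coeff_Suc_0 newton_coeff_eq_0 newton_coeff_Suc_Suc[OF \<open>q \<noteq> 0\<close>])
  finally show ?case
    by (simp add: T_def)
qed

theorem proposition4p4:
  fixes N :: nat and q :: complex and X :: "'a::euclidean_space set"
    and tu sg :: "(nat \<Rightarrow> real) \<Rightarrow> 'a" and m n k :: nat
  assumes "prime N" and "N \<ge> 3" and "q ^ N = 1" and "q \<noteq> 1"
    and "convex X"
    and "singular_simplex m (top_of_set X) tu"
    and "singular_simplex n (top_of_set X) sg"
  shows "qbdpow q k (m + n + 1) (Poly_Mapping.single (conv_simplex m n tu sg) 1)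
       = (\<Sum>i\<le>k. qsmult (q powi (int i * (int m + 1 - int k + int i)) * qbinom q k i)
                    (newt_prod (newton q m tu (k - i)) (newton q n sg i)))"
proof -
  have "q \<noteq> 0"
    using assms(2,3) by (cases "q = 0") (auto simp: power_0_left)
  moreover have "tu \<in> extensional (standard_simplex m)" "sg \<in> extensional (standard_simplex n)"
    using assms(6,7) by (simp_all add: singular_simplex_def)
  ultimately show ?thesis
    using qbdpow_conv_simplex by (simp add: newton_coeff_def)
qed

end
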